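(* Let $G$ and $H$ be finite simple graphs and $k$ an integer. Then $$\gamma^d_k(G\,\square\, H)\leq \min\{\gamma^d_k(G)\,n(H),\ \gamma^d_k(H)\,n(G)\}.$$
   Context: All graphs are finite and simple; $n(G)=|V_G|$. For $S\subseteq V_G$ and $v\in V_G$, $N_S(v)=\{u\in S: uv\in E_G\}$ and $\bar S=V_G\setminus S$. For an integer $k$, a nonempty $S\subseteq V_G$ is a global defensive $k$-alliance in $G$ if every vertex outside $S$ has a neighbor in $S$ and $|N_S(v)|\ge |N_{\bar S}(v)|+k$ for every $v\in S$; $\gamma^d_k(G)$ is the minimum size of such a set ($\infty$ if none exists, with $\infty\cdot n=\infty$). The Cartesian product $G\,\square\,H$ has vertex set $V_G\times V_H$, with $(g,h)\sim(g',h')$ iff either $g=g'$ and $hh'\in E_H$, or $gg'\in E_G$ and $h=h'$. *)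

theory Defs
  imports Main "HOL-Library.Extended_Nat"
begin

definition simple_graph :: "'a set \<Rightarrow> ('a \<Rightarrow> 'a \<Rightarrow> bool) \<Rightarrow> bool" where
  "simple_graph V E \<longleftrightarrow> finite V \<and> (\<forall>u v. E u v \<longrightarrow> u \<in> V \<and> v \<in> V)
     \<and> (\<forall>u v. E u v \<longrightarrow> E v u) \<and> (\<forall>v. \<not> E v v)"

definition nbhd :: "('a \<Rightarrow> 'a \<Rightarrow> bool) \<Rightarrow> 'a set \<Rightarrow> 'a \<Rightarrow> 'a set" where
  "nbhd E S v = {u \<in> S. E u v}"

definition global_def_alliance ::
  "'a set \<Rightarrow> ('a \<Rightarrow> 'a \<Rightarrow> bool) \<Rightarrow> int \<Rightarrow> 'a set \<Rightarrow> bool" where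
  "global_def_alliance V E k S \<longleftrightarrow> S \<subseteq> V \<and> S \<noteq> {}
     \<and> (\<forall>v \<in> V - S. \<exists>u \<in> S. E u v)
     \<and> (\<forall>v \<in> S. int (card (nbhd E S v)) \<ge> int (card (nbhd E (V - S) v)) + k)"

text \<open>Global defensive k-alliance number; \<infinity> if no such set exists (Inf {} = \<infinity>).\<close>
definition gda_number :: "'a set \<Rightarrow> ('a \<Rightarrow> 'a \<Rightarrow> bool) \<Rightarrow> int \<Rightarrow> enat" where
  "gda_number V E k = Inf {enat (card S) | S. global_def_alliance V E k S}"

definition cart_edges ::
  "('a \<Rightarrow> 'a \<Rightarrow> bool) \<Rightarrow> ('b \<Rightarrow> 'b \<Rightarrow> bool) \<Rightarrow> ('a \<times> 'b) \<Rightarrow> ('a \<times> 'b) \<Rightarrow> bool" where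
  "cart_edges EG EH x y \<longleftrightarrow>
     (fst x = fst y \<and> EH (snd x) (snd y)) \<or> (EG (fst x) (fst y) \<and> snd x = snd y)"

end

theory Submission
  imports Defs
begin

text \<open>If S is a global defensive k-alliance of G, then every vertex (g, h) of S \<times> V_H has
  the same neighbours outside S \<times> V_H as g has outside S (only G-edges leave the layer
  S \<times> {h}), and at least as many inside, so S \<times> V_H is a k-alliance of G \<box> H of size
  |S| n(H). Swapping the factors is a graph isomorphism, which gives the other bound.\<close>

lemma global_def_alliance_image:
  assumes inj: "inj_on f V"
    and edges: "\<And>u v. u \<in> V \<Longrightarrow> v \<in> V \<Longrightarrow> E' (f u) (f v) \<longleftrightarrow> E u v"
    and S: "global_def_alliance V E k S"
  shows "global_def_alliance (f ` V) E' k (f ` S)"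
proof -
  have SV: "S \<subseteq> V" "S \<noteq> {}" and dom: "\<forall>v \<in> V - S. \<exists>u \<in> S. E u v"
    and def: "\<forall>v \<in> S. int (card (nbhd E S v)) \<ge> int (card (nbhd E (V - S) v)) + k"
    using S unfolding global_def_alliance_def by auto
  have diff: "f ` V - f ` S = f ` (V - S)"
    using inj SV(1) by (simp add: inj_on_image_set_diff)
  have nbhd_image: "nbhd E' (f ` T) (f v) = f ` nbhd E T v" if "T \<subseteq> V" "v \<in> V" for T v
    using that edges unfolding nbhd_def by auto
  have card_nbhd: "card (nbhd E' (f ` T) (f v)) = card (nbhd E T v)" if "T \<subseteq> V" "v \<in> V" for T v
  proof -
    have "nbhd E T v \<subseteq> V" using that(1) unfolding nbhd_def by auto
    then show ?thesis
      unfolding nbhd_image[OF that] by (rule card_image[OF inj_on_subset[OF inj]])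
  qed
  show ?thesis
    unfolding global_def_alliance_def diff
  proof (intro conjI ballI)
    fix w assume "w \<in> f ` (V - S)"
    then obtain v where v: "w = f v" "v \<in> V - S" by auto
    with dom obtain u where "u \<in> S" "E u v" by auto
    with v SV(1) edges show "\<exists>u \<in> f ` S. E' u w" by blast
  next
    fix w assume "w \<in> f ` S"
    then obtain v where "w = f v" "v \<in> S" by auto
    with def SV(1) card_nbhd[of S v] card_nbhd[of "V - S" v]
    show "int (card (nbhd E' (f ` S) w)) \<ge> int (card (nbhd E' (f ` (V - S)) w)) + k"
      by auto
  qed (use SV in auto)
qed

lemma gda_number_le_alliance: "global_def_alliance V E k S \<Longrightarrow> gda_number V E k \<le> enat (card S)"
  unfolding gda_number_def by (auto intro: Inf_lower)

lemma gda_number_image_le: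
  assumes "inj_on f V"
    and "\<And>u v. u \<in> V \<Longrightarrow> v \<in> V \<Longrightarrow> E' (f u) (f v) \<longleftrightarrow> E u v"
  shows "gda_number (f ` V) E' k \<le> gda_number V E k"
  unfolding gda_number_def
proof (rule Inf_mono)
  fix b assume "b \<in> {enat (card S) | S. global_def_alliance V E k S}"
  then obtain S where S: "b = enat (card S)" "global_def_alliance V E k S" by blast
  have "global_def_alliance (f ` V) E' k (f ` S)"
    using assms S(2) by (rule global_def_alliance_image)
  moreover have "card (f ` S) = card S"
    using S(2) assms(1) unfolding global_def_alliance_def by (meson card_image inj_on_subset)
  ultimately show "\<exists>a \<in> {enat (card T) | T. global_def_alliance (f ` V) E' k T}. a \<le> b"
    using S(1) by force
qed

lemma gda_number_attained:
  assumes "gda_number V E k \<noteq> \<infinity>"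
  obtains S where "global_def_alliance V E k S" "gda_number V E k = enat (card S)"
proof -
  let ?A = "{enat (card S) | S. global_def_alliance V E k S}"
  have "?A \<noteq> {}"
    using assms unfolding gda_number_def by (metis Inf_empty top_enat_def)
  then have "Inf ?A \<in> ?A"
    unfolding Inf_enat_def by (auto intro: LeastI)
  then show ?thesis
    using that unfolding gda_number_def by blast
qed

lemma global_def_alliance_cart_layer:
  assumes fin: "finite VG" "finite VH" and "VH \<noteq> {}"
    and S: "global_def_alliance VG EG k S"
  shows "global_def_alliance (VG \<times> VH) (cart_edges EG EH) k (S \<times> VH)"
proof -
  have SV: "S \<subseteq> VG" "S \<noteq> {}" and dom: "\<forall>v \<in> VG - S. \<exists>u \<in> S. EG u v"
    and def: "\<forall>v \<in> S. int (card (nbhd EG S v)) \<ge> int (card (nbhd EG (VG - S) v)) + k"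
    using S unfolding global_def_alliance_def by auto
  let ?E = "cart_edges EG EH"
  let ?layer = "\<lambda>h u. (u, h)"
  have layer_card: "card (?layer h ` A) = card A" for h :: 'b and A :: "'a set"
    by (rule card_image) (auto simp: inj_on_def)
  show ?thesis
    unfolding global_def_alliance_def
  proof (intro conjI ballI)
    fix v assume "v \<in> VG \<times> VH - S \<times> VH"
    then obtain g h where gh: "v = (g, h)" "g \<in> VG - S" "h \<in> VH" by auto
    with dom obtain u where "u \<in> S" "EG u g" by auto
    with gh show "\<exists>u \<in> S \<times> VH. ?E u v"
      by (intro bexI[of _ "(u, h)"]) (auto simp: cart_edges_def)
  next
    fix v assume "v \<in> S \<times> VH"
    then obtain g h where gh: "v = (g, h)" "g \<in> S" "h \<in> VH" by auto
    have outside: "nbhd ?E (VG \<times> VH - S \<times> VH) v = ?layer h ` nbhd EG (VG - S) g"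
      using gh unfolding nbhd_def cart_edges_def by auto
    have inside: "?layer h ` nbhd EG S g \<subseteq> nbhd ?E (S \<times> VH) v"
      using gh unfolding nbhd_def cart_edges_def by auto
    have "finite (nbhd ?E (S \<times> VH) v)"
      using fin SV(1) unfolding nbhd_def by (auto intro: finite_subset)
    then have "card (nbhd EG S g) \<le> card (nbhd ?E (S \<times> VH) v)"
      using card_mono[OF _ inside] layer_card by metis
    with def gh show "int (card (nbhd ?E (S \<times> VH) v))
        \<ge> int (card (nbhd ?E (VG \<times> VH - S \<times> VH) v)) + k"
      unfolding outside layer_card by force
  qed (use SV assms(3) in auto)
qed

lemma gda_number_cart_le:
  assumes "finite VG" "finite VH" "VH \<noteq> {}"
  shows "gda_number (VG \<times> VH) (cart_edges EG EH) k \<le> gda_number VG EG k * enat (card VH)"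
proof (cases "gda_number VG EG k = \<infinity>")
  case True
  with assms show ?thesis by (simp add: imult_is_infinity)
next
  case False
  then obtain S where S: "global_def_alliance VG EG k S" "gda_number VG EG k = enat (card S)"
    by (rule gda_number_attained)
  from gda_number_le_alliance[OF global_def_alliance_cart_layer[OF assms S(1)]] S(2)
  show ?thesis by (simp add: card_cartesian_product)
qed

lemma gda_number_cart_commute_le:
  "gda_number (VG \<times> VH) (cart_edges EG EH) k \<le> gda_number (VH \<times> VG) (cart_edges EH EG) k"
proof -
  have "gda_number (prod.swap ` (VH \<times> VG)) (cart_edges EG EH) k
      \<le> gda_number (VH \<times> VG) (cart_edges EH EG) k"
    by (rule gda_number_image_le) (auto simp: cart_edges_def)
  then show ?thesis by (simp add: product_swap)
qed

theorem mainTheorem2: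
  fixes VG :: "'a set" and EG :: "'a \<Rightarrow> 'a \<Rightarrow> bool"
    and VH :: "'b set" and EH :: "'b \<Rightarrow> 'b \<Rightarrow> bool"
    and k :: int
  assumes "simple_graph VG EG" and "VG \<noteq> {}"
    and "simple_graph VH EH" and "VH \<noteq> {}"
  shows "gda_number (VG \<times> VH) (cart_edges EG EH) k
     \<le> min (gda_number VG EG k * enat (card VH)) (gda_number VH EH k * enat (card VG))"
proof -
  have fin: "finite VG" "finite VH"
    using assms unfolding simple_graph_def by auto
  have "gda_number (VG \<times> VH) (cart_edges EG EH) k \<le> gda_number VG EG k * enat (card VH)"
    using fin assms(4) by (rule gda_number_cart_le)
  moreover have "gda_number (VG \<times> VH) (cart_edges EG EH) k \<le> gda_number VH EH k * enat (card VG)"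
    using gda_number_cart_commute_le gda_number_cart_le[OF fin(2,1) assms(2)] by (rule order_trans)
  ultimately show ?thesis by simp
qed

end
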